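(* In the setting of the context, let $\mu^*\in U$ be such that $(\Phi,\mu^* )$ has no singular connection. Then $\{f_\mu\}_{\mu\in U}$ satisfies Hypothesis (E) at $\mu^*$.
   Context: Let $N\ge2$, $\lambda\in(0,1)$, and $\varphi_1,\dots,\varphi_N\colon[0,1]\to[0,1]$ bi-Lipschitz with Lipschitz constant $\le\lambda$, $\Phi=\{\varphi_i\}$, and assume $\varphi_i([0,1])\subset(0,1)$ for every $i$. Let $U=\{\mu=(\mu_1,\dots,\mu_{N-1}):0<\mu_1<\cdots<\mu_{N-1}<1\}$, $\mu_0=0$, $\mu_N=1$. For $\mu\in U$, $f_\mu\colon[0,1]\to[0,1]$ satisfies $f_\mu=\varphi_i$ on $A_{i,\mu}=(\mu_{i-1},\mu_i)$, and at each point of $S_\mu=\{0,\mu_1,\dots,\mu_{N-1},1\}$, $f_\mu$ is left or right continuous. For $\alpha=(i_0,\dots,i_{n-1})$, $\varphi^\alpha=\varphi_{i_{n-1}}\circ\cdots\circ\varphi_{i_0}$; $(\Phi,\mu)$ has a singular connection if $\varphi^\alpha(\mu_i)=\mu_j$ for some $n\ge1$, $\alpha\in\{1,\dots,N\}^n$, $i,j\in\{1,\dots,N-1\}$. A point $x$ is regular of order $n$ if $f_\mu^k(x)\notin S_\mu$ for $0\le k<n$; $\mathcal{I}_n(f_\mu)$ is the set of tuples $(i_0,\dots,i_{n-1})$ such that some regular point of order $n$ has $f_\mu^k(x)\in A_{i_k,\mu}$ for $0\le k<n$. With $U_\delta(\mu^* )=U\cap B_\delta(\mu^* )$ and $\mathcal{J}^\delta_n(\mu^*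 )=\bigcup_{\mu\in U_\delta(\mu^* )}\mathcal{I}_n(f_\mu)$, Hypothesis (E) at $\mu^*$ means $\lim_{\delta\to0^+}\limsup_{n\to\infty}\frac1n\log\#\mathcal{J}_n^\delta(\mu^* )=0$. *)

theory Defs
  imports "HOL-Analysis.Analysis" "HOL-Library.Extended_Real"
begin

text \<open>Parameters mu = (mu_1,...,mu_{N-1}) are represented as functions nat => real whose
  values outside {1..N-1} are 0 (canonical representation).\<close>

definition param_space :: "nat \<Rightarrow> (nat \<Rightarrow> real) set" where
  "param_space N = {\<mu>. (\<forall>i. (i = 0 \<or> N - 1 < i) \<longrightarrow> \<mu> i = 0) \<and>
      (\<forall>i\<in>{1..N-1}. 0 < \<mu> i \<and> \<mu> i < 1) \<and>
      (\<forall>i j. 1 \<le> i \<longrightarrow> i < j \<longrightarrow> j \<le> N - 1 \<longrightarrow> \<mu> i < \<mu> j)}"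

definition mu_ext :: "nat \<Rightarrow> (nat \<Rightarrow> real) \<Rightarrow> nat \<Rightarrow> real" where
  "mu_ext N \<mu> i = (if i = 0 then 0 else if i = N then 1 else \<mu> i)"

definition A_int :: "nat \<Rightarrow> (nat \<Rightarrow> real) \<Rightarrow> nat \<Rightarrow> real set" where
  "A_int N \<mu> i = {mu_ext N \<mu> (i - 1) <..< mu_ext N \<mu> i}"

definition S_set :: "nat \<Rightarrow> (nat \<Rightarrow> real) \<Rightarrow> real set" where
  "S_set N \<mu> = mu_ext N \<mu> ` {0..N}"

definition param_dist :: "nat \<Rightarrow> (nat \<Rightarrow> real) \<Rightarrow> (nat \<Rightarrow> real) \<Rightarrow> real" where
  "param_dist N \<mu> \<nu> = sqrt (\<Sum>i=1..N-1. (\<mu> i - \<nu> i)\<^sup>2)"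

definition bi_lipschitz_contr :: "real \<Rightarrow> (real \<Rightarrow> real) \<Rightarrow> bool" where
  "bi_lipschitz_contr lam g \<longleftrightarrow>
     (\<exists>c>0. \<forall>x\<in>{0..1}. \<forall>y\<in>{0..1}. c * \<bar>x - y\<bar> \<le> \<bar>g x - g y\<bar>) \<and>
     (\<forall>x\<in>{0..1}. \<forall>y\<in>{0..1}. \<bar>g x - g y\<bar> \<le> lam * \<bar>x - y\<bar>)"

text \<open>phi^alpha = phi_{i_{n-1}} o ... o phi_{i_0}\<close>
definition comp_word :: "(nat \<Rightarrow> real \<Rightarrow> real) \<Rightarrow> nat list \<Rightarrow> real \<Rightarrow> real" where
  "comp_word \<phi> \<alpha> x = fold (\<lambda>i y. \<phi> i y) \<alpha> x"

definition singular_connection :: "nat \<Rightarrow> (nat \<Rightarrow> real \<Rightarrow> real) \<Rightarrow> (nat \<Rightarrow> real) \<Rightarrow> bool" where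
  "singular_connection N \<phi> \<mu> \<longleftrightarrow>
     (\<exists>\<alpha> i j. length \<alpha> \<ge> 1 \<and> set \<alpha> \<subseteq> {1..N} \<and> i \<in> {1..N-1} \<and> j \<in> {1..N-1} \<and>
        comp_word \<phi> \<alpha> (\<mu> i) = \<mu> j)"

definition admissible_map :: "nat \<Rightarrow> (nat \<Rightarrow> real \<Rightarrow> real) \<Rightarrow> (nat \<Rightarrow> real) \<Rightarrow> (real \<Rightarrow> real) \<Rightarrow> bool" where
  "admissible_map N \<phi> \<mu> g \<longleftrightarrow>
     g ` {0..1} \<subseteq> {0..1} \<and>
     (\<forall>i\<in>{1..N}. \<forall>x\<in>A_int N \<mu> i. g x = \<phi> i x) \<and>
     (\<forall>s\<in>S_set N \<mu>. continuous (at s within {0..s}) g \<or>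
                      continuous (at s within {s..1}) g)"

definition regular_point :: "nat \<Rightarrow> (nat \<Rightarrow> real) \<Rightarrow> (real \<Rightarrow> real) \<Rightarrow> nat \<Rightarrow> real \<Rightarrow> bool" where
  "regular_point N \<mu> g n x \<longleftrightarrow> x \<in> {0..1} \<and> (\<forall>k<n. (g ^^ k) x \<notin> S_set N \<mu>)"

definition itins :: "nat \<Rightarrow> (nat \<Rightarrow> real) \<Rightarrow> (real \<Rightarrow> real) \<Rightarrow> nat \<Rightarrow> nat list set" where
  "itins N \<mu> g n = {\<alpha>. length \<alpha> = n \<and> set \<alpha> \<subseteq> {1..N} \<and>
      (\<exists>x. regular_point N \<mu> g n x \<and> (\<forall>k<n. (g ^^ k) x \<in> A_int N \<mu> (\<alpha> ! k)))}"

definition J_set :: "nat \<Rightarrow> ((nat \<Rightarrow> real) \<Rightarrow> real \<Rightarrow> real) \<Rightarrow> (nat \<Rightarrow> real) \<Rightarrow> real \<Rightarrow> nat \<Rightarrow> nat list set" where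
  "J_set N f \<mu>s \<delta> n = (\<Union>\<mu>\<in>{\<mu>\<in>param_space N. param_dist N \<mu> \<mu>s < \<delta>}. itins N \<mu> (f \<mu>) n)"

definition hypothesis_E :: "nat \<Rightarrow> ((nat \<Rightarrow> real) \<Rightarrow> real \<Rightarrow> real) \<Rightarrow> (nat \<Rightarrow> real) \<Rightarrow> bool" where
  "hypothesis_E N f \<mu>s \<longleftrightarrow>
     ((\<lambda>\<delta>. limsup (\<lambda>n. ereal (ln (real (card (J_set N f \<mu>s \<delta> n))) / real n)))
        \<longlongrightarrow> 0) (at_right 0)"

end

theory Submission
  imports Defs
begin

(* Let W be the set of all itineraries of the maps f_mu with |mu - mu*| < delta. If a word a
   branches in W, i.e. a@[i] and a@[j] both lie in W for some i < j, then the interval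
   phi^a([0,1]), of length at most lam^|a|, reaches below mu_i and above mu'_i for parameters
   mu, mu' that are delta-close to mu*, so it lies within lam^|a| + delta of mu*_i. Without
   singular connections the points phi^g(mu*_p) with 1 <= |g| <= L keep a distance eta > 0 from
   every mu*_q; hence, once lam^|a| and delta are below eta/4, no word a@g with 1 <= |g| <= L
   branches again. Every long word then has at most N extensions of length L + 1, so
   #J_n <= C N^(n/(L+1)) and the entropy limsup is at most (log N)/(L+1), for every L. *)

section \<open>Prefix-closed languages with sparse branching\<close>

definition branches :: "'a list set \<Rightarrow> 'a list \<Rightarrow> bool" where
  "branches W a \<longleftrightarrow> (\<exists>i j. i \<noteq> j \<and> a @ [i] \<in> W \<and> a @ [j] \<in> W)"

definition extensions :: "'a list set \<Rightarrow> 'a list \<Rightarrow> nat \<Rightarrow> 'a list set" where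
  "extensions W a d = {g. length g = d \<and> a @ g \<in> W}"

definition words_of_length :: "'a list set \<Rightarrow> nat \<Rightarrow> 'a list set" where
  "words_of_length W n = {a \<in> W. length a = n}"

lemma extensions_0_subset: "extensions W a 0 \<subseteq> {[]}"
  unfolding extensions_def by auto

locale prefix_closed_language =
  fixes A :: "'a set" and W :: "'a list set"
  assumes finite_alphabet: "finite A"
    and words_over_alphabet: "W \<subseteq> lists A"
    and prefix_closed: "a @ b \<in> W \<Longrightarrow> a \<in> W"
begin

lemma finite_words_of_length: "finite (words_of_length W n)"
  and card_words_of_length_le: "card (words_of_length W n) \<le> card A ^ n"
proof -
  have sub: "words_of_length W n \<subseteq> {xs. set xs \<subseteq> A \<and> length xs = n}"
    using words_over_alphabet unfolding words_of_length_def by auto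
  show "finite (words_of_length W n)"
    using finite_subset[OF sub finite_lists_length_eq[OF finite_alphabet]] .
  show "card (words_of_length W n) \<le> card A ^ n"
    using card_mono[OF finite_lists_length_eq[OF finite_alphabet] sub]
    by (simp add: card_lists_length_eq[OF finite_alphabet])
qed

lemma finite_extensions: "finite (extensions W b d)"
proof -
  have "extensions W b d \<subseteq> {xs. set xs \<subseteq> A \<and> length xs = d}"
    using words_over_alphabet unfolding extensions_def by auto
  then show ?thesis using finite_subset finite_lists_length_eq[OF finite_alphabet] by blast
qed

lemma successors_subset_alphabet: "{i. b @ [i] \<in> W} \<subseteq> A"
  using words_over_alphabet by auto

lemma extensions_Suc:
  "extensions W b (Suc d) = (\<Union>i\<in>{i. b @ [i] \<in> W}. (#) i ` extensions W (b @ [i]) d)"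
proof
  show "extensions W b (Suc d) \<subseteq> (\<Union>i\<in>{i. b @ [i] \<in> W}. (#) i ` extensions W (b @ [i]) d)"
  proof
    fix g assume g: "g \<in> extensions W b (Suc d)"
    then obtain i g' where gi: "g = i # g'" "length g' = d"
      unfolding extensions_def by (auto simp: length_Suc_conv)
    then have "(b @ [i]) @ g' \<in> W" using g unfolding extensions_def by simp
    with gi show "g \<in> (\<Union>i\<in>{i. b @ [i] \<in> W}. (#) i ` extensions W (b @ [i]) d)"
      using prefix_closed unfolding extensions_def by blast
  qed
qed (auto simp: extensions_def)

lemma branches_imp_mem: "branches W b \<Longrightarrow> b \<in> W"
  unfolding branches_def using prefix_closed by blast

lemma extensions_Suc_subset_if_not_branches:
  assumes "\<not> branches W b"
  obtains i where "extensions W b (Suc d) \<subseteq> (#) i ` extensions W (b @ [i]) d"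
proof -
  have "\<exists>i. {j. b @ [j] \<in> W} \<subseteq> {i}"
    using assms unfolding branches_def by blast
  then show ?thesis using that extensions_Suc[of b d] by blast
qed

lemma card_extensions_Suc_le_if_not_branches:
  assumes "\<not> branches W b"
  obtains i where "card (extensions W b (Suc d)) \<le> card (extensions W (b @ [i]) d)"
proof -
  obtain i where "extensions W b (Suc d) \<subseteq> (#) i ` extensions W (b @ [i]) d"
    using extensions_Suc_subset_if_not_branches[OF assms] .
  then have "card (extensions W b (Suc d)) \<le> card ((#) i ` extensions W (b @ [i]) d)"
    by (intro card_mono finite_imageI finite_extensions)
  also have "\<dots> \<le> card (extensions W (b @ [i]) d)"
    by (rule card_image_le[OF finite_extensions])
  finally show ?thesis using that by blast
qed

lemma card_extensions_le_1:
  assumes "\<And>g. length g < d \<Longrightarrow> b @ g \<in> W \<Longrightarrow> \<not> branches W (b @ g)"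
  shows "card (extensions W b d) \<le> 1"
  using assms
proof (induction d arbitrary: b)
  case 0
  then show ?case using card_mono[OF _ extensions_0_subset] by fastforce
next
  case (Suc d)
  have "\<not> branches W b"
    using Suc.prems[of "[]"] branches_imp_mem by auto
  then obtain i where "card (extensions W b (Suc d)) \<le> card (extensions W (b @ [i]) d)"
    by (rule card_extensions_Suc_le_if_not_branches)
  also have "\<dots> \<le> 1"
  proof (rule Suc.IH)
    fix g assume "length g < d" "(b @ [i]) @ g \<in> W"
    then show "\<not> branches W ((b @ [i]) @ g)" using Suc.prems[of "i # g"] by simp
  qed
  finally show ?case .
qed

end

locale sparsely_branching_language = prefix_closed_language +
  fixes T0 L :: nat
  assumes no_branching_after_branching:
    "\<lbrakk>T0 \<le> length a; branches W a; 1 \<le> length g; length g \<le> L; a @ g \<in> W\<rbrakk>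
       \<Longrightarrow> \<not> branches W (a @ g)"
begin

lemma card_extensions_le_card_alphabet:
  assumes "A \<noteq> {}" and "T0 \<le> length b" and "d \<le> L + 1"
  shows "card (extensions W b d) \<le> card A"
  using assms(2,3)
proof (induction d arbitrary: b)
  case 0
  have "card (extensions W b 0) \<le> 1" using card_mono[OF _ extensions_0_subset] by fastforce
  also have "1 \<le> card A" using assms(1) finite_alphabet by (simp add: Suc_leI card_gt_0_iff)
  finally show ?case .
next
  case (Suc d)
  show ?case
  proof (cases "branches W b")
    case True
    let ?S = "{i. b @ [i] \<in> W}"
    have "finite ?S" using finite_subset[OF successors_subset_alphabet finite_alphabet] .
    have ext_le_1: "card ((#) i ` extensions W (b @ [i]) d) \<le> 1" for i
    proof -
      have "card (extensions W (b @ [i]) d) \<le> 1"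
      proof (rule card_extensions_le_1)
        fix g assume "length g < d" "(b @ [i]) @ g \<in> W"
        then show "\<not> branches W ((b @ [i]) @ g)"
          using no_branching_after_branching[OF Suc.prems(1) True, of "i # g"] Suc.prems(2) by simp
      qed
      then show ?thesis using card_image_le[OF finite_extensions, of "(#) i" "b @ [i]" d] by simp
    qed
    have "card (extensions W b (Suc d)) \<le> (\<Sum>i\<in>?S. card ((#) i ` extensions W (b @ [i]) d))"
      unfolding extensions_Suc by (rule card_UN_le[OF \<open>finite ?S\<close>])
    also have "\<dots> \<le> (\<Sum>i\<in>?S. 1)" by (rule sum_mono) (rule ext_le_1)
    also have "\<dots> = card ?S" by simp
    also have "\<dots> \<le> card A" by (rule card_mono[OF finite_alphabet successors_subset_alphabet])
    finally show ?thesis .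
  next
    case False
    then obtain i where "card (extensions W b (Suc d)) \<le> card (extensions W (b @ [i]) d)"
      by (rule card_extensions_Suc_le_if_not_branches)
    also have "\<dots> \<le> card A" using Suc.IH[of "b @ [i]"] Suc.prems by simp
    finally show ?thesis .
  qed
qed

lemma card_words_of_length_add_le:
  assumes "A \<noteq> {}" and "T0 \<le> t"
  shows "card (words_of_length W (t + (L + 1))) \<le> card A * card (words_of_length W t)"
proof -
  let ?U = "\<Union>a\<in>words_of_length W t. (@) a ` extensions W a (L + 1)"
  have "words_of_length W (t + (L + 1)) \<subseteq> ?U"
  proof
    fix c assume c: "c \<in> words_of_length W (t + (L + 1))"
    then have "take t c \<in> words_of_length W t"
      using prefix_closed[of "take t c" "drop t c"] unfolding words_of_length_def by auto
    moreover have "drop t c \<in> extensions W (take t c) (L + 1)"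
      using c unfolding words_of_length_def extensions_def by auto
    ultimately have "take t c @ drop t c \<in> ?U" by blast
    then show "c \<in> ?U" by simp
  qed
  then have "card (words_of_length W (t + (L + 1))) \<le> card ?U"
    by (intro card_mono finite_UN_I finite_imageI finite_words_of_length finite_extensions)
  also have "\<dots> \<le> (\<Sum>a\<in>words_of_length W t. card ((@) a ` extensions W a (L + 1)))"
    by (rule card_UN_le[OF finite_words_of_length])
  also have "\<dots> \<le> (\<Sum>a\<in>words_of_length W t. card A)"
  proof (rule sum_mono)
    fix a assume "a \<in> words_of_length W t"
    then have "card (extensions W a (L + 1)) \<le> card A"
      using card_extensions_le_card_alphabet[OF assms(1)] assms(2)
      unfolding words_of_length_def by simp
    then show "card ((@) a ` extensions W a (L + 1)) \<le> card A"
      using card_image_le[OF finite_extensions, of "(@) a" a "L + 1"] by simp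
  qed
  finally show ?thesis by (simp add: mult.commute)
qed

lemma card_words_of_length_bound:
  assumes "A \<noteq> {}"
  shows "card (words_of_length W n) \<le> card A ^ (T0 + L + 1) * card A ^ (n div (L + 1))"
proof (induction n rule: less_induct)
  case (less n)
  have A1: "1 \<le> card A" using assms finite_alphabet by (simp add: Suc_leI card_gt_0_iff)
  show ?case
  proof (cases "n < T0 + (L + 1)")
    case True
    have "card (words_of_length W n) \<le> card A ^ n" by (rule card_words_of_length_le)
    also have "\<dots> \<le> card A ^ (T0 + L + 1)" using True A1 by (intro power_increasing) auto
    also have "\<dots> \<le> card A ^ (T0 + L + 1) * card A ^ (n div (L + 1))" using A1 by simp
    finally show ?thesis .
  next
    case False
    define t where "t = n - (L + 1)"
    have n: "n = t + (L + 1)" "T0 \<le> t" "t < n" using False unfolding t_def by auto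
    have "card (words_of_length W n) \<le> card A * card (words_of_length W t)"
      using card_words_of_length_add_le[OF assms n(2)] n(1) by simp
    also have "\<dots> \<le> card A * (card A ^ (T0 + L + 1) * card A ^ (t div (L + 1)))"
      using less.IH[OF n(3)] by simp
    also have "\<dots> = card A ^ (T0 + L + 1) * card A ^ (t div (L + 1) + 1)"
      by (simp add: power_add)
    also have "t div (L + 1) + 1 = n div (L + 1)"
      by (subst n(1), subst div_add_self2) simp_all
    finally show ?thesis .
  qed
qed

end

section \<open>Exponential growth rates\<close>

lemma limsup_ln_over_n_nonneg:
  fixes c :: "nat \<Rightarrow> nat"
  shows "0 \<le> limsup (\<lambda>n. ereal (ln (real (c n)) / real n))"
proof (rule le_Limsup)
  show "\<forall>\<^sub>F n in sequentially. 0 \<le> ereal (ln (real (c n)) / real n)"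
  proof (rule always_eventually, rule allI)
    fix n
    have "0 \<le> ln (real (c n))" by (cases "c n = 0") auto
    then show "0 \<le> ereal (ln (real (c n)) / real n)" by simp
  qed
qed simp

lemma limsup_ln_over_n_le:
  fixes c :: "nat \<Rightarrow> nat" and N K L :: nat
  assumes "1 \<le> N" and bound: "\<And>n. c n \<le> N ^ K * N ^ (n div (L + 1))"
  shows "limsup (\<lambda>n. ereal (ln (real (c n)) / real n)) \<le> ereal (ln (real N) / real (L + 1))"
proof -
  define b where "b n = K * ln (real N) / real n + ln (real N) / real (L + 1)" for n
  have lnN: "0 \<le> ln (real N)" using assms(1) by simp
  have "\<forall>\<^sub>F n in sequentially. ereal (ln (real (c n)) / real n) \<le> ereal (b n)"
    using eventually_ge_at_top[of 1]
  proof eventually_elim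
    case (elim n)
    have "ln (real (c n)) \<le> K * ln (real N) + real n / real (L + 1) * ln (real N)"
    proof (cases "c n = 0")
      case True
      then show ?thesis using lnN by simp
    next
      case False
      have "real (c n) \<le> real N ^ K * real N ^ (n div (L + 1))"
        using of_nat_mono[OF bound[of n]] by simp
      then have "ln (real (c n)) \<le> ln (real N ^ K * real N ^ (n div (L + 1)))"
        using False by simp
      also have "\<dots> = K * ln (real N) + real (n div (L + 1)) * ln (real N)"
        using assms(1) by (simp add: ln_mult ln_realpow)
      also have "\<dots> \<le> K * ln (real N) + real n / real (L + 1) * ln (real N)"
        using lnN of_nat_div_le_of_nat[of n "L + 1"] by (intro add_left_mono mult_right_mono) auto
      finally show ?thesis .
    qed
    then have "ln (real (c n)) / real n \<le> (K * ln (real N) + real n / real (L + 1) * ln (real N)) / real n"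
      by (intro divide_right_mono) auto
    also have "\<dots> = b n" using elim unfolding b_def by (simp add: field_simps)
    finally show ?case by simp
  qed
  then have "limsup (\<lambda>n. ereal (ln (real (c n)) / real n)) \<le> limsup (\<lambda>n. ereal (b n))"
    by (rule Limsup_mono)
  also have "\<dots> = ereal (ln (real N) / real (L + 1))"
  proof (rule lim_imp_Limsup)
    have "b \<longlonglongrightarrow> 0 + ln (real N) / real (L + 1)"
      unfolding b_def by (intro tendsto_add lim_const_over_n tendsto_const)
    then show "(\<lambda>n. ereal (b n)) \<longlonglongrightarrow> ereal (ln (real N) / real (L + 1))" by simp
  qed simp
  finally show ?thesis .
qed

lemma tendsto_zero_if_eventually_le_divide_Suc:
  fixes g :: "'a \<Rightarrow> ereal" and C :: real
  assumes nonneg: "\<And>x. 0 \<le> g x"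
    and bound: "\<And>L::nat. \<forall>\<^sub>F x in F. g x \<le> ereal (C / real (L + 1))"
  shows "(g \<longlongrightarrow> 0) F"
proof (rule order_tendstoI)
  fix a :: ereal assume "a < 0"
  then show "\<forall>\<^sub>F x in F. a < g x"
    using nonneg by (intro always_eventually allI) (meson le_less_trans not_le)
next
  fix a :: ereal assume "0 < a"
  obtain r where r: "0 < r" "ereal r \<le> a"
  proof (cases a)
    case (real r)
    then show ?thesis using \<open>0 < a\<close> that by auto
  qed (use \<open>0 < a\<close> that[of 1] in auto)
  obtain L :: nat where "C / r < real L" using reals_Archimedean2 by blast
  then have "C / real (L + 1) < r"
    using r(1) by (simp add: field_simps divide_less_eq)
  show "\<forall>\<^sub>F x in F. g x < a"
    using bound[of L]
  proof (rule eventually_mono)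
    fix x assume "g x \<le> ereal (C / real (L + 1))"
    also have "\<dots> < ereal r" using \<open>C / real (L + 1) < r\<close> by simp
    also have "\<dots> \<le> a" by (rule r(2))
    finally show "g x < a" .
  qed
qed

section \<open>Itineraries of the maps f_mu\<close>

lemma comp_word_Nil [simp]: "comp_word \<phi> [] x = x"
  unfolding comp_word_def by simp

lemma comp_word_Cons [simp]: "comp_word \<phi> (i # a) x = comp_word \<phi> a (\<phi> i x)"
  unfolding comp_word_def by simp

lemma comp_word_append [simp]: "comp_word \<phi> (a @ b) x = comp_word \<phi> b (comp_word \<phi> a x)"
  unfolding comp_word_def by simp

lemma comp_word_in_unit_interval:
  assumes "\<And>i. i \<in> I \<Longrightarrow> \<phi> i ` {0..1} \<subseteq> {0..1}" and "set a \<subseteq> I" and "x \<in> {0..1}"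
  shows "comp_word \<phi> a x \<in> {0..1::real}"
  using assms(2,3)
proof (induction a arbitrary: x)
  case (Cons i a)
  then have "\<phi> i x \<in> {0..1}" using assms(1)[of i] by (auto simp: image_subset_iff)
  then show ?case using Cons by simp
qed simp

lemma lipschitz_on_comp_word:
  assumes "\<And>i. i \<in> I \<Longrightarrow> lam-lipschitz_on {0..1} (\<phi> i)"
    and "\<And>i. i \<in> I \<Longrightarrow> \<phi> i ` {0..1} \<subseteq> {0..1}" and "set a \<subseteq> I"
  shows "(lam ^ length a)-lipschitz_on {0..1::real} (comp_word \<phi> a)"
  using assms(3)
proof (induction a)
  case Nil
  have "comp_word \<phi> [] = (\<lambda>x. x)" by (simp add: fun_eq_iff)
  then show ?case by (simp add: lipschitz_on_id)
next
  case (Cons i a)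
  have "lam-lipschitz_on {0..1} (\<phi> i)"
    using assms(1) Cons.prems by simp
  moreover have "(lam ^ length a)-lipschitz_on (\<phi> i ` {0..1}) (comp_word \<phi> a)"
    by (rule lipschitz_on_subset[OF Cons.IH]) (use Cons.prems assms(2) in auto)
  ultimately have "(lam ^ length a * lam)-lipschitz_on {0..1} (\<lambda>x. comp_word \<phi> a (\<phi> i x))"
    by (rule lipschitz_on_compose2)
  moreover have "comp_word \<phi> (i # a) = (\<lambda>x. comp_word \<phi> a (\<phi> i x))" by (simp add: fun_eq_iff)
  ultimately show ?case by (simp add: mult.commute)
qed

lemma funpow_eq_comp_word_take:
  assumes adm: "admissible_map N \<phi> \<mu> g" and "set a \<subseteq> {1..N}"
    and orbit: "\<forall>k<length a. (g ^^ k) x \<in> A_int N \<mu> (a ! k)"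
  shows "k \<le> length a \<Longrightarrow> (g ^^ k) x = comp_word \<phi> (take k a) x"
proof (induction k)
  case (Suc k)
  then have k: "k < length a" by simp
  have "a ! k \<in> {1..N}" using \<open>set a \<subseteq> {1..N}\<close> k nth_mem by blast
  moreover have "(g ^^ k) x \<in> A_int N \<mu> (a ! k)" using orbit k by blast
  ultimately have "(g ^^ Suc k) x = \<phi> (a ! k) ((g ^^ k) x)"
    using adm unfolding admissible_map_def by simp
  then show ?case using Suc k by (simp add: take_Suc_conv_app_nth)
qed simp

lemma itins_snocD:
  assumes adm: "admissible_map N \<phi> \<mu> g" and mem: "a @ [i] \<in> itins N \<mu> g n"
  obtains x where "x \<in> {0..1}" "comp_word \<phi> a x \<in> A_int N \<mu> i"
proof -
  obtain x where "x \<in> {0..1}" and orbit: "\<forall>k<length (a @ [i]). (g ^^ k) x \<in> A_int N \<mu> ((a @ [i]) ! k)"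
    using mem unfolding itins_def regular_point_def by auto
  moreover have "(g ^^ length a) x = comp_word \<phi> a x"
    using funpow_eq_comp_word_take[OF adm _ orbit, of "length a"] mem unfolding itins_def by simp
  moreover have "(g ^^ length a) x \<in> A_int N \<mu> i"
    using orbit[rule_format, of "length a"] by simp
  ultimately show ?thesis using that by simp
qed

lemma itins_appendD:
  assumes "a @ b \<in> itins N \<mu> g n"
  shows "a \<in> itins N \<mu> g (length a)"
proof -
  have n: "n = length a + length b" and "set (a @ b) \<subseteq> {1..N}"
    using assms unfolding itins_def by auto
  obtain x where regular: "regular_point N \<mu> g n x"
    and orbit: "\<forall>k<n. (g ^^ k) x \<in> A_int N \<mu> ((a @ b) ! k)"
    using assms unfolding itins_def by auto
  have "regular_point N \<mu> g (length a) x"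
    using regular n unfolding regular_point_def by auto
  moreover have "\<forall>k<length a. (g ^^ k) x \<in> A_int N \<mu> (a ! k)"
  proof (intro allI impI)
    fix k assume k: "k < length a"
    then have "(g ^^ k) x \<in> A_int N \<mu> ((a @ b) ! k)" using orbit n by simp
    then show "(g ^^ k) x \<in> A_int N \<mu> (a ! k)" using k by (simp add: nth_append)
  qed
  ultimately show ?thesis using \<open>set (a @ b) \<subseteq> {1..N}\<close> unfolding itins_def by auto
qed

lemma abs_diff_le_param_dist:
  assumes "i \<in> {1..N-1}"
  shows "\<bar>\<mu> i - \<nu> i\<bar> \<le> param_dist N \<mu> \<nu>"
proof -
  have "(\<mu> i - \<nu> i)\<^sup>2 \<le> (\<Sum>j=1..N-1. (\<mu> j - \<nu> j)\<^sup>2)"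
    using assms by (intro member_le_sum) auto
  then have "sqrt ((\<mu> i - \<nu> i)\<^sup>2) \<le> param_dist N \<mu> \<nu>"
    unfolding param_dist_def by (rule real_sqrt_le_mono)
  then show ?thesis by simp
qed

lemma A_int_less_mu:
  assumes "1 \<le> i" "i < N" and "y \<in> A_int N \<mu> i"
  shows "y < \<mu> i"
proof -
  have "mu_ext N \<mu> i = \<mu> i" using assms(1,2) unfolding mu_ext_def by simp
  then show ?thesis using assms(3) unfolding A_int_def by simp
qed

lemma A_int_greater_mu:
  assumes "\<mu> \<in> param_space N" and "1 \<le> i" "i < j" "j \<le> N" and "y \<in> A_int N \<mu> j"
  shows "\<mu> i < y"
proof -
  have "\<mu> i \<le> \<mu> (j - 1)"
  proof (cases "i = j - 1")
    case False
    have increasing: "\<forall>i j. 1 \<le> i \<longrightarrow> i < j \<longrightarrow> j \<le> N - 1 \<longrightarrow> \<mu> i < \<mu> j"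
      using assms(1) unfolding param_space_def by blast
    have "i < j - 1" "j - 1 \<le> N - 1" using False assms(3,4) by auto
    then show ?thesis using increasing assms(2) by (auto intro: less_imp_le)
  qed simp
  moreover have "mu_ext N \<mu> (j - 1) = \<mu> (j - 1)"
    using assms(2-4) unfolding mu_ext_def by simp
  then have "\<mu> (j - 1) < y"
    using assms(5) unfolding A_int_def by simp
  ultimately show ?thesis by simp
qed

definition nearby_itins :: "nat \<Rightarrow> ((nat \<Rightarrow> real) \<Rightarrow> real \<Rightarrow> real) \<Rightarrow> (nat \<Rightarrow> real) \<Rightarrow> real \<Rightarrow> nat list set"
  where "nearby_itins N f \<mu>s \<delta> = {a. a \<in> J_set N f \<mu>s \<delta> (length a)}"

lemma mem_nearby_itins_iff:
  "a \<in> nearby_itins N f \<mu>s \<delta> \<longleftrightarrow>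
     (\<exists>\<mu>\<in>param_space N. param_dist N \<mu> \<mu>s < \<delta> \<and> a \<in> itins N \<mu> (f \<mu>) (length a))"
  unfolding nearby_itins_def J_set_def by blast

lemma J_set_eq_words_of_length: "J_set N f \<mu>s \<delta> n = words_of_length (nearby_itins N f \<mu>s \<delta>) n"
proof -
  have "length a = n" if "a \<in> J_set N f \<mu>s \<delta> n" for a
    using that unfolding J_set_def itins_def by blast
  then show ?thesis unfolding words_of_length_def nearby_itins_def by auto
qed

lemma prefix_closed_language_nearby_itins: "prefix_closed_language {1..N} (nearby_itins N f \<mu>s \<delta>)"
proof
  show "nearby_itins N f \<mu>s \<delta> \<subseteq> lists {1..N}"
  proof
    fix a assume "a \<in> nearby_itins N f \<mu>s \<delta>"
    then obtain \<mu> where "a \<in> itins N \<mu> (f \<mu>) (length a)"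
      unfolding mem_nearby_itins_iff by blast
    then show "a \<in> lists {1..N}" unfolding itins_def by auto
  qed
  show "a \<in> nearby_itins N f \<mu>s \<delta>" if "a @ b \<in> nearby_itins N f \<mu>s \<delta>" for a b
    using that itins_appendD unfolding mem_nearby_itins_iff by blast
qed simp

definition connection_gap :: "nat \<Rightarrow> (nat \<Rightarrow> real \<Rightarrow> real) \<Rightarrow> (nat \<Rightarrow> real) \<Rightarrow> nat \<Rightarrow> real \<Rightarrow> bool"
  where "connection_gap N \<phi> \<mu> L \<eta> \<longleftrightarrow>
    (\<forall>g p q. set g \<subseteq> {1..N} \<longrightarrow> 1 \<le> length g \<longrightarrow> length g \<le> L \<longrightarrow>
       p \<in> {1..N-1} \<longrightarrow> q \<in> {1..N-1} \<longrightarrow> \<eta> \<le> \<bar>comp_word \<phi> g (\<mu> p) - \<mu> q\<bar>)"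

lemma no_singular_connection_imp_connection_gap:
  assumes "\<not> singular_connection N \<phi> \<mu>"
  obtains \<eta> where "0 < \<eta>" "connection_gap N \<phi> \<mu> L \<eta>"
proof -
  define G where "G = {g. set g \<subseteq> {1..N} \<and> length g \<le> L \<and> 1 \<le> length g}"
  define V where "V = (\<lambda>(g, p, q). \<bar>comp_word \<phi> g (\<mu> p) - \<mu> q\<bar>) ` (G \<times> {1..N-1} \<times> {1..N-1})"
  have "finite G" unfolding G_def
    by (rule finite_subset[OF _ finite_lists_length_le[of "{1..N}" L]]) auto
  then have "finite V" unfolding V_def by auto
  have V_pos: "0 < v" if "v \<in> V" for v
  proof -
    obtain g p q where v: "v = \<bar>comp_word \<phi> g (\<mu> p) - \<mu> q\<bar>"
      and "g \<in> G" "p \<in> {1..N-1}" "q \<in> {1..N-1}"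
      using \<open>v \<in> V\<close> unfolding V_def by auto
    then have "comp_word \<phi> g (\<mu> p) \<noteq> \<mu> q"
      using assms unfolding singular_connection_def G_def by auto
    then show ?thesis using v by simp
  qed
  define \<eta> where "\<eta> = (if V = {} then 1 else Min V)"
  have "0 < \<eta>" using V_pos \<open>finite V\<close> unfolding \<eta>_def by auto
  moreover have "connection_gap N \<phi> \<mu> L \<eta>"
    unfolding connection_gap_def
  proof (intro allI impI)
    fix g p q assume "set g \<subseteq> {1..N}" "1 \<le> length g" "length g \<le> L" "p \<in> {1..N-1}" "q \<in> {1..N-1}"
    then have "\<bar>comp_word \<phi> g (\<mu> p) - \<mu> q\<bar> \<in> V" unfolding V_def G_def by force
    then show "\<eta> \<le> \<bar>comp_word \<phi> g (\<mu> p) - \<mu> q\<bar>" using \<open>finite V\<close> unfolding \<eta>_def by auto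
  qed
  ultimately show ?thesis using that by blast
qed

locale contracting_family =
  fixes N :: nat and lam :: real and \<phi> :: "nat \<Rightarrow> real \<Rightarrow> real"
    and f :: "(nat \<Rightarrow> real) \<Rightarrow> real \<Rightarrow> real"
  assumes lam_nonneg: "0 \<le> lam" and lam_less_1: "lam < 1"
    and lipschitz_branch: "i \<in> {1..N} \<Longrightarrow> lam-lipschitz_on {0..1} (\<phi> i)"
    and branch_maps_unit_interval: "i \<in> {1..N} \<Longrightarrow> \<phi> i ` {0..1} \<subseteq> {0..1}"
    and admissible: "\<mu> \<in> param_space N \<Longrightarrow> admissible_map N \<phi> \<mu> (f \<mu>)"
begin

lemma comp_word_abs_diff_le:
  assumes "set a \<subseteq> {1..N}" and "x \<in> {0..1}" and "y \<in> {0..1}"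
  shows "\<bar>comp_word \<phi> a x - comp_word \<phi> a y\<bar> \<le> lam ^ length a * \<bar>x - y\<bar>"
  using lipschitz_onD[OF lipschitz_on_comp_word[OF lipschitz_branch branch_maps_unit_interval assms(1)]
      assms(2,3)]
  by (simp add: dist_real_def)

lemma branching_word_close_to_mu:
  assumes "branches (nearby_itins N f \<mu>s \<delta>) a"
  obtains p where "p \<in> {1..N-1}"
    and "\<And>z. z \<in> {0..1} \<Longrightarrow> \<bar>comp_word \<phi> a z - \<mu>s p\<bar> \<le> lam ^ length a + \<delta>"
proof -
  obtain i j where "i < j" and ai: "a @ [i] \<in> nearby_itins N f \<mu>s \<delta>"
    and aj: "a @ [j] \<in> nearby_itins N f \<mu>s \<delta>"
  proof -
    obtain i j where ij: "i \<noteq> j" "a @ [i] \<in> nearby_itins N f \<mu>s \<delta>" "a @ [j] \<in> nearby_itins N f \<mu>s \<delta>"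
      using assms unfolding branches_def by blast
    show ?thesis
    proof (cases "i < j")
      case True
      with ij that show ?thesis by blast
    next
      case False
      with ij(1) have "j < i" by simp
      with ij that show ?thesis by blast
    qed
  qed
  obtain \<mu> where \<mu>: "\<mu> \<in> param_space N" "param_dist N \<mu> \<mu>s < \<delta>"
    and itin: "a @ [i] \<in> itins N \<mu> (f \<mu>) (length (a @ [i]))"
    using ai unfolding mem_nearby_itins_iff by blast
  obtain \<mu>' where \<mu>': "\<mu>' \<in> param_space N" "param_dist N \<mu>' \<mu>s < \<delta>"
    and itin': "a @ [j] \<in> itins N \<mu>' (f \<mu>') (length (a @ [j]))"
    using aj unfolding mem_nearby_itins_iff by blast
  obtain x where x: "x \<in> {0..1}" "comp_word \<phi> a x \<in> A_int N \<mu> i"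
    using itins_snocD[OF admissible[OF \<mu>(1)] itin] .
  obtain x' where x': "x' \<in> {0..1}" "comp_word \<phi> a x' \<in> A_int N \<mu>' j"
    using itins_snocD[OF admissible[OF \<mu>'(1)] itin'] .
  have "set (a @ [i]) \<subseteq> {1..N}" "j \<le> N"
    using itin itin' unfolding itins_def by auto
  then have a: "set a \<subseteq> {1..N}" and i: "i \<in> {1..N-1}" using \<open>i < j\<close> by auto
  have below: "comp_word \<phi> a x < \<mu> i"
    using A_int_less_mu[OF _ _ x(2)] i by auto
  have above: "\<mu>' i < comp_word \<phi> a x'"
    using A_int_greater_mu[OF \<mu>'(1) _ \<open>i < j\<close> \<open>j \<le> N\<close> x'(2)] i by auto
  have close_i: "\<bar>\<mu> i - \<mu>s i\<bar> < \<delta>" "\<bar>\<mu>' i - \<mu>s i\<bar> < \<delta>"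
    using abs_diff_le_param_dist[OF i] \<mu>(2) \<mu>'(2) by (meson le_less_trans)+
  have "\<bar>comp_word \<phi> a z - \<mu>s i\<bar> \<le> lam ^ length a + \<delta>" if z: "z \<in> {0..1}" for z
  proof -
    have "\<bar>comp_word \<phi> a z - comp_word \<phi> a y\<bar> \<le> lam ^ length a" if y: "y \<in> {0..1}" for y
    proof -
      have "\<bar>comp_word \<phi> a z - comp_word \<phi> a y\<bar> \<le> lam ^ length a * \<bar>z - y\<bar>"
        by (rule comp_word_abs_diff_le[OF a z y])
      also have "\<dots> \<le> lam ^ length a * 1"
        using z y lam_nonneg by (intro mult_left_mono) auto
      finally show ?thesis by simp
    qed
    from this[OF x(1)] this[OF x'(1)] show ?thesis
      using below above close_i by (simp add: abs_le_iff abs_less_iff)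
  qed
  with i show ?thesis by (rule that)
qed

lemma branching_twice_imp_near_connection:
  assumes "\<mu>s \<in> param_space N"
    and a: "branches (nearby_itins N f \<mu>s \<delta>) a"
    and ag: "branches (nearby_itins N f \<mu>s \<delta>) (a @ g)"
  obtains p q where "p \<in> {1..N-1}" "q \<in> {1..N-1}"
    and "\<bar>comp_word \<phi> g (\<mu>s p) - \<mu>s q\<bar> \<le> 2 * lam ^ length a + 2 * \<delta>"
proof -
  obtain p where p: "p \<in> {1..N-1}" "\<And>z. z \<in> {0..1} \<Longrightarrow> \<bar>comp_word \<phi> a z - \<mu>s p\<bar> \<le> lam ^ length a + \<delta>"
    using branching_word_close_to_mu[OF a] by blast
  obtain q where q: "q \<in> {1..N-1}"
    "\<And>z. z \<in> {0..1} \<Longrightarrow> \<bar>comp_word \<phi> (a @ g) z - \<mu>s q\<bar> \<le> lam ^ length (a @ g) + \<delta>"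
    using branching_word_close_to_mu[OF ag] by blast
  have "a @ g \<in> nearby_itins N f \<mu>s \<delta>"
    using ag prefix_closed_language.branches_imp_mem[OF prefix_closed_language_nearby_itins] by blast
  then have "set (a @ g) \<subseteq> {1..N}"
    by (force simp: mem_nearby_itins_iff itins_def)
  then have a_set: "set a \<subseteq> {1..N}" and g_set: "set g \<subseteq> {1..N}" by auto
  define w where "w = comp_word \<phi> a 0"
  have "w \<in> {0..1}"
    unfolding w_def by (rule comp_word_in_unit_interval[OF branch_maps_unit_interval a_set]) auto
  moreover have "\<mu>s p \<in> {0..1}"
    using assms(1) p(1) unfolding param_space_def by (auto intro: less_imp_le)
  ultimately have "\<bar>comp_word \<phi> g w - comp_word \<phi> g (\<mu>s p)\<bar> \<le> lam ^ length g * \<bar>w - \<mu>s p\<bar>"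
    by (rule comp_word_abs_diff_le[OF g_set])
  also have "\<dots> \<le> \<bar>w - \<mu>s p\<bar>"
    using lam_nonneg lam_less_1 by (intro mult_left_le_one_le) (auto intro: power_le_one)
  also have "\<dots> \<le> lam ^ length a + \<delta>"
    unfolding w_def by (rule p(2)) simp
  finally have close_p: "\<bar>comp_word \<phi> g w - comp_word \<phi> g (\<mu>s p)\<bar> \<le> lam ^ length a + \<delta>" .
  have "\<bar>comp_word \<phi> g w - \<mu>s q\<bar> \<le> lam ^ length (a @ g) + \<delta>"
    using q(2)[of 0] unfolding w_def by simp
  moreover have "lam ^ length (a @ g) \<le> lam ^ length a"
    using lam_nonneg lam_less_1 by (auto intro: power_decreasing)
  ultimately have close_q: "\<bar>comp_word \<phi> g w - \<mu>s q\<bar> \<le> lam ^ length a + \<delta>" by linarith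
  have "\<bar>comp_word \<phi> g (\<mu>s p) - \<mu>s q\<bar>
      \<le> \<bar>comp_word \<phi> g w - comp_word \<phi> g (\<mu>s p)\<bar> + \<bar>comp_word \<phi> g w - \<mu>s q\<bar>"
    using abs_triangle_ineq4[of "comp_word \<phi> g w - \<mu>s q" "comp_word \<phi> g w - comp_word \<phi> g (\<mu>s p)"]
    by (simp add: add.commute)
  also have "\<dots> \<le> 2 * lam ^ length a + 2 * \<delta>"
    using close_p close_q by linarith
  finally show ?thesis using that p(1) q(1) by blast
qed

lemma sparsely_branching_nearby_itins:
  assumes "\<mu>s \<in> param_space N" and gap: "connection_gap N \<phi> \<mu>s L \<eta>"
    and "lam ^ T0 < \<eta> / 4" and "\<delta> \<le> \<eta> / 4"
  shows "sparsely_branching_language {1..N} (nearby_itins N f \<mu>s \<delta>) T0 L"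
proof (intro sparsely_branching_language.intro sparsely_branching_language_axioms.intro
    prefix_closed_language_nearby_itins notI)
  fix a g
  assume a: "T0 \<le> length a" "branches (nearby_itins N f \<mu>s \<delta>) a"
    and g: "1 \<le> length g" "length g \<le> L" "a @ g \<in> nearby_itins N f \<mu>s \<delta>"
      "branches (nearby_itins N f \<mu>s \<delta>) (a @ g)"
  obtain p q where pq: "p \<in> {1..N-1}" "q \<in> {1..N-1}"
    and near: "\<bar>comp_word \<phi> g (\<mu>s p) - \<mu>s q\<bar> \<le> 2 * lam ^ length a + 2 * \<delta>"
    using branching_twice_imp_near_connection[OF assms(1) a(2) g(4)] by blast
  have "set g \<subseteq> {1..N}"
    using g(3) by (force simp: mem_nearby_itins_iff itins_def)
  then have "\<eta> \<le> \<bar>comp_word \<phi> g (\<mu>s p) - \<mu>s q\<bar>"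
    using gap g(1,2) pq unfolding connection_gap_def by blast
  also note near
  also have "2 * lam ^ length a + 2 * \<delta> < \<eta>"
  proof -
    have "lam ^ length a \<le> lam ^ T0"
      using a(1) lam_nonneg lam_less_1 by (auto intro: power_decreasing)
    then show ?thesis using assms(3,4) by linarith
  qed
  finally show False by simp
qed

lemma eventually_limsup_entropy_le:
  assumes "1 \<le> N" and "\<mu>s \<in> param_space N" and "\<not> singular_connection N \<phi> \<mu>s"
  shows "\<forall>\<^sub>F \<delta> in at_right 0.
    limsup (\<lambda>n. ereal (ln (real (card (J_set N f \<mu>s \<delta> n))) / real n)) \<le> ereal (ln (real N) / real (L + 1))"
proof -
  obtain \<eta> where "0 < \<eta>" and gap: "connection_gap N \<phi> \<mu>s L \<eta>"
    using no_singular_connection_imp_connection_gap[OF assms(3)] .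
  obtain T0 where T0: "lam ^ T0 < \<eta> / 4"
    using real_arch_pow_inv[of "\<eta> / 4" lam] \<open>0 < \<eta>\<close> lam_less_1 by auto
  show ?thesis
  proof (rule eventually_at_rightI)
    fix \<delta> :: real assume "\<delta> \<in> {0<..<\<eta> / 4}"
    then interpret sparsely_branching_language "{1..N}" "nearby_itins N f \<mu>s \<delta>" T0 L
      using sparsely_branching_nearby_itins[OF assms(2) gap T0] by simp
    have "card (J_set N f \<mu>s \<delta> n) \<le> N ^ (T0 + L + 1) * N ^ (n div (L + 1))" for n
      using card_words_of_length_bound[of n] assms(1) by (simp add: J_set_eq_words_of_length)
    then show "limsup (\<lambda>n. ereal (ln (real (card (J_set N f \<mu>s \<delta> n))) / real n))
        \<le> ereal (ln (real N) / real (L + 1))"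
      by (rule limsup_ln_over_n_le[OF assms(1)])
  qed (use \<open>0 < \<eta>\<close> in simp)
qed

end

lemma bi_lipschitz_contr_imp_lipschitz_on:
  "0 \<le> lam \<Longrightarrow> bi_lipschitz_contr lam g \<Longrightarrow> lam-lipschitz_on {0..1} g"
  unfolding bi_lipschitz_contr_def by (intro lipschitz_onI) (auto simp: dist_real_def)

theorem lemma4p5:
  fixes N :: nat and lam :: real and \<phi> :: "nat \<Rightarrow> real \<Rightarrow> real"
    and f :: "(nat \<Rightarrow> real) \<Rightarrow> real \<Rightarrow> real" and \<mu>s :: "nat \<Rightarrow> real"
  assumes "N \<ge> 2" and "0 < lam" and "lam < 1"
    and "\<forall>i\<in>{1..N}. bi_lipschitz_contr lam (\<phi> i)"
    and "\<forall>i\<in>{1..N}. \<phi> i ` {0..1} \<subseteq> {0<..<1}"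
    and "\<forall>\<mu>\<in>param_space N. admissible_map N \<phi> \<mu> (f \<mu>)"
    and "\<mu>s \<in> param_space N"
    and "\<not> singular_connection N \<phi> \<mu>s"
  shows "hypothesis_E N f \<mu>s"
proof -
  interpret contracting_family N lam \<phi> f
  proof
    fix i assume i: "i \<in> {1..N}"
    show "lam-lipschitz_on {0..1} (\<phi> i)"
      using assms(2,4) i by (auto intro: bi_lipschitz_contr_imp_lipschitz_on)
    have "\<phi> i ` {0..1} \<subseteq> {0<..<1}" using assms(5) i by blast
    then show "\<phi> i ` {0..1} \<subseteq> {0..1}" by auto
  qed (use assms(2,3,6) in auto)
  show ?thesis
    unfolding hypothesis_E_def
    by (intro tendsto_zero_if_eventually_le_divide_Suc[where C = "ln (real N)"] limsup_ln_over_n_nonneg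
        eventually_limsup_entropy_le assms(7,8)) (use assms(1) in simp)
qed

end
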